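(* Let $G$ be a signed cyclic graph and let $D_G$ be a virtual link diagram associated with $G$. Then $D_G$ is checkerboard colorable.
   Context: A cyclic graph is a finite graph together with a cyclic ordering of the half-edges at each vertex (equivalently, a graph cellularly embedded in a closed orientable surface); a signed cyclic graph additionally has each edge labelled $+$ or $-$. Given a signed cyclic graph $G$, view it as cellularly embedded in a closed oriented surface and perform the medial construction: place a real crossing at the midpoint of each edge $e$ and join the crossings around each face, obtaining a link diagram on the surface; the crossing at $e$ is chosen so that, if $e$ is positive, its $B$-smoothing separates the two sides along $e$ (following the boundaries of the endpoints of $e$) and its $A$-smoothing connects across $e$; for a negative edge the roles of $A$ and $B$ are exchanged ($A$-, $B$-smoothings in Kauffman's standard sense). Immersing this surface diagram generically in the plane, marking artefacts of the immersion as virtual crossings, gives a virtual link diagram; any such diagram is called a virtual link diagram associated with $G$. A virtual link diagram is checkerboard colorable if one can color a small neighbourhood of one side of each arc so that near each real crossing the colored sides alternate around the crossing, and near each virtual crossing the colorings of the two strands pass through independently of each other. *)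

theory Defs
  imports Main
begin

text \<open>A cyclic graph is given by a finite set H of half-edges, a permutation
  sigma of H (the cyclic order of the half-edges around each vertex; vertices
  are the sigma-orbits) and a fixed-point-free involution alpha on H (edges are
  the alpha-orbits).  This is the standard combinatorial description of a graph
  cellularly embedded in a closed oriented surface.\<close>

definition cyclic_graph :: "'h set \<Rightarrow> ('h \<Rightarrow> 'h) \<Rightarrow> ('h \<Rightarrow> 'h) \<Rightarrow> bool" where
  "cyclic_graph H \<sigma> \<alpha> \<longleftrightarrow>
     finite H \<and> bij_betw \<sigma> H H \<and>
     (\<forall>h\<in>H. \<alpha> h \<in> H \<and> \<alpha> h \<noteq> h \<and> \<alpha> (\<alpha> h) = h)"

text \<open>A signing: every edge gets a sign (True = positive), i.e. both half-edges
  of an edge carry the same sign.\<close>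

definition edge_signing :: "'h set \<Rightarrow> ('h \<Rightarrow> 'h) \<Rightarrow> ('h \<Rightarrow> bool) \<Rightarrow> bool" where
  "edge_signing H \<alpha> sg \<longleftrightarrow> (\<forall>h\<in>H. sg (\<alpha> h) = sg h)"

text \<open>A virtual link diagram is modelled by its underlying 4-valent plane map:
  a finite set VD of darts (ends of edge segments at crossings), the
  counterclockwise rotation rot at each crossing (orbits of size exactly 4),
  the fixed-point-free involution arc joining the two ends of each edge segment,
  the predicate isreal marking real (as opposed to virtual) crossings, and for
  real crossings the predicate over marking the two darts of the over-strand.\<close>

definition orbit :: "('a \<Rightarrow> 'a) \<Rightarrow> 'a \<Rightarrow> 'a set" where
  "orbit f x = {(f ^^ n) x | n. True}"

definition map_component :: "('a \<Rightarrow> 'a) \<Rightarrow> ('a \<Rightarrow> 'a) \<Rightarrow> 'a \<Rightarrow> 'a set" where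
  "map_component r a x = {y. (\<lambda>u v. v = r u \<or> v = a u)\<^sup>*\<^sup>* x y}"

text \<open>Planarity: every connected component of the map has Euler characteristic 2
  (vertices - edges + faces = 2), faces being the orbits of rot o arc.\<close>

definition planar_map :: "'d set \<Rightarrow> ('d \<Rightarrow> 'd) \<Rightarrow> ('d \<Rightarrow> 'd) \<Rightarrow> bool" where
  "planar_map VD rot arc \<longleftrightarrow>
     (\<forall>x\<in>VD. let C = map_component rot arc x in
        card (orbit rot ` C) + card (orbit (rot \<circ> arc) ` C) = card (orbit arc ` C) + 2)"

definition virtual_link_diagram ::
  "'d set \<Rightarrow> ('d \<Rightarrow> 'd) \<Rightarrow> ('d \<Rightarrow> 'd) \<Rightarrow> ('d \<Rightarrow> bool) \<Rightarrow> ('d \<Rightarrow> bool) \<Rightarrow> bool" where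
  "virtual_link_diagram VD rot arc isreal over \<longleftrightarrow>
     finite VD \<and> bij_betw rot VD VD \<and>
     (\<forall>d\<in>VD. (rot ^^ 4) d = d \<and> rot (rot d) \<noteq> d) \<and>
     (\<forall>d\<in>VD. arc d \<in> VD \<and> arc d \<noteq> d \<and> arc (arc d) = d) \<and>
     (\<forall>d\<in>VD. isreal (rot d) = isreal d) \<and>
     (\<forall>d\<in>VD. isreal d \<longrightarrow> over (rot (rot d)) = over d \<and> over (rot d) \<noteq> over d) \<and>
     planar_map VD rot arc"

text \<open>Following a strand from a dart d: leave along the edge segment, and pass
  straight through virtual crossings (dart x continues as the opposite dart
  rot (rot x)).  strand_reach d e: the strand leaving d reaches dart e, having
  passed only through virtual crossings in between.\<close>

inductive strand_reach :: "('d \<Rightarrow> 'd) \<Rightarrow> ('d \<Rightarrow> 'd) \<Rightarrow> ('d \<Rightarrow> bool) \<Rightarrow> 'd \<Rightarrow> 'd \<Rightarrow> bool"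
  for rot arc isreal where
  start: "strand_reach rot arc isreal d (arc d)"
| pass: "strand_reach rot arc isreal d x \<Longrightarrow> \<not> isreal x \<Longrightarrow>
         strand_reach rot arc isreal d (arc (rot (rot x)))"

text \<open>Crossings correspond to edges of G.  The four ends of the crossing at the
  edge {g, alpha g} are (g,True), (g,False), (alpha g,True), (alpha g,False):
  (g,True) is the end heading along the corner (g, sigma g) and (g,False) the
  end heading along the corner (sigma^-1 g, g).  Counterclockwise order:
  (g,True), (g,False), (alpha g,True), (alpha g,False).  The corner between
  (g,True) and (g,False) is the region of the vertex at g; the corner between
  (g,False) and (alpha g,True) is a face region.\<close>

definition med_rot :: "('h \<Rightarrow> 'h) \<Rightarrow> 'h \<times> bool \<Rightarrow> 'h \<times> bool" where
  "med_rot \<alpha> x = (if snd x then (fst x, False) else (\<alpha> (fst x), True))"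

definition med_arc :: "'h set \<Rightarrow> ('h \<Rightarrow> 'h) \<Rightarrow> 'h \<times> bool \<Rightarrow> 'h \<times> bool" where
  "med_arc H \<sigma> x = (if snd x then (\<sigma> (fst x), False) else (the_inv_into H \<sigma> (fst x), True))"

text \<open>By Kauffman's convention, the A-regions at a crossing
  are the corners (o, rot o) swept counterclockwise by the over-strand darts o.
  For a positive edge the A-smoothing connects across e (joins the two vertex
  corners), so the over darts are the (g,True); for negative edges the roles
  are exchanged.\<close>

definition med_over :: "('h \<Rightarrow> bool) \<Rightarrow> 'h \<times> bool \<Rightarrow> bool" where
  "med_over sg x = (snd x = sg (fst x))"

text \<open>A virtual link diagram is associated with G when its abstract link diagram
  (real crossings with their cyclic orders and crossing information, joined by
  the strands through virtual crossings) is, orientation-preservingly,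
  isomorphic to the medial diagram of G, and it has no extra components
  consisting only of virtual crossings.\<close>

definition associated_with ::
  "'h set \<Rightarrow> ('h \<Rightarrow> 'h) \<Rightarrow> ('h \<Rightarrow> 'h) \<Rightarrow> ('h \<Rightarrow> bool) \<Rightarrow>
   'd set \<Rightarrow> ('d \<Rightarrow> 'd) \<Rightarrow> ('d \<Rightarrow> 'd) \<Rightarrow> ('d \<Rightarrow> bool) \<Rightarrow> ('d \<Rightarrow> bool) \<Rightarrow> bool" where
  "associated_with H \<sigma> \<alpha> sg VD rot arc isreal over \<longleftrightarrow>
     (\<exists>f. bij_betw f (H \<times> UNIV) {d\<in>VD. isreal d} \<and>
        (\<forall>x\<in>H \<times> UNIV.
           f (med_rot \<alpha> x) = rot (f x) \<and>
           strand_reach rot arc isreal (f x) (f (med_arc H \<sigma> x)) \<and>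
           over (f x) = med_over sg x)) \<and>
     (\<forall>x\<in>VD. \<not> isreal x \<longrightarrow> (\<exists>d\<in>VD. isreal d \<and> strand_reach rot arc isreal d x))"

text \<open>col d = True means: the coloured side of the edge segment at dart d is the
  left side when facing outward along d from its crossing.  Conditions: the
  coloured side is a well-defined side of each edge segment (left at one end is
  right at the other); at real crossings the coloured sides alternate; at
  virtual crossings each strand's colouring passes straight through.\<close>

definition checkerboard_colorable ::
  "'d set \<Rightarrow> ('d \<Rightarrow> 'd) \<Rightarrow> ('d \<Rightarrow> 'd) \<Rightarrow> ('d \<Rightarrow> bool) \<Rightarrow> bool" where
  "checkerboard_colorable VD rot arc isreal \<longleftrightarrow>
     (\<exists>col :: 'd \<Rightarrow> bool. \<forall>d\<in>VD.
        col (arc d) \<noteq> col d \<and>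
        (isreal d \<longrightarrow> col (rot d) \<noteq> col d) \<and>
        (\<not> isreal d \<longrightarrow> col (rot (rot d)) \<noteq> col d))"

end

theory Submission
  imports Defs
begin

text \<open>Colour each real dart of D_G by the Boolean component of the corresponding
  end (g, b) of the medial crossing.  Both the rotation med_rot and the arc map
  med_arc flip b, so the colours alternate around every real crossing and are
  opposite at the two real ends of every strand.  A virtual dart gets the
  opposite of the colour of the real dart whose strand passes through it; since
  the strand through the opposite dart of a virtual crossing runs backwards from
  the other real end, the colourings of the two strands pass independently
  through every virtual crossing.\<close>

locale four_valent_map =
  fixes VD :: "'d set" and rot arc :: "'d \<Rightarrow> 'd" and isreal :: "'d \<Rightarrow> bool"
  assumes rot_in: "d \<in> VD \<Longrightarrow> rot d \<in> VD"
    and inj_on_rot: "inj_on rot VD"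
    and rot_rot_rot_rot: "d \<in> VD \<Longrightarrow> rot (rot (rot (rot d))) = d"
    and arc_in: "d \<in> VD \<Longrightarrow> arc d \<in> VD"
    and arc_arc: "d \<in> VD \<Longrightarrow> arc (arc d) = d"
    and isreal_rot: "d \<in> VD \<Longrightarrow> isreal (rot d) = isreal d"
begin

abbreviation reach :: "'d \<Rightarrow> 'd \<Rightarrow> bool" where
  "reach \<equiv> strand_reach rot arc isreal"

lemma isreal_rot_rot: "d \<in> VD \<Longrightarrow> isreal (rot (rot d)) = isreal d"
  by (simp add: isreal_rot rot_in)

lemma arc_eqD: "x \<in> VD \<Longrightarrow> y \<in> VD \<Longrightarrow> arc x = arc y \<Longrightarrow> x = y"
  by (metis arc_arc)

lemma strand_step_eqD:
  "x \<in> VD \<Longrightarrow> y \<in> VD \<Longrightarrow> arc (rot (rot x)) = arc (rot (rot y)) \<Longrightarrow> x = y"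
  by (metis arc_eqD inj_onD inj_on_rot rot_in)

lemma reach_in: "reach d x \<Longrightarrow> d \<in> VD \<Longrightarrow> x \<in> VD"
  by (induction rule: strand_reach.induct) (auto simp: arc_in rot_in)

lemma reach_arc_real: "reach d x \<Longrightarrow> isreal (arc d) \<Longrightarrow> x = arc d"
  by (induction rule: strand_reach.induct) auto

lemma reach_cases_last_step:
  assumes "reach d y"
  obtains "y = arc d" | z where "reach d z" "\<not> isreal z" "y = arc (rot (rot z))"
  using assms by cases auto

lemma reach_source_unique:
  assumes "reach d x" "d \<in> VD" "isreal d" "reach d' x" "d' \<in> VD" "isreal d'"
  shows "d = d'"
  using assms
proof (induction arbitrary: d' rule: strand_reach.induct)
  case (start d)
  from start.prems(3) show ?case
  proof (cases rule: reach_cases_last_step)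
    case 1
    then show ?thesis using arc_eqD start.prems(1,4) by simp
  next
    case (2 z)
    have z: "z \<in> VD" using reach_in[OF 2(1) start.prems(4)] .
    have "d = rot (rot z)" using arc_eqD[OF start.prems(1) rot_in[OF rot_in[OF z]] 2(3)] .
    with z 2(2) start.prems(2) show ?thesis by (simp add: isreal_rot_rot)
  qed
next
  case (pass d x)
  have x: "x \<in> VD" using reach_in[OF pass.hyps(1) pass.prems(1)] .
  from pass.prems(3) show ?case
  proof (cases rule: reach_cases_last_step)
    case 1
    have "d' = rot (rot x)" using arc_eqD[OF rot_in[OF rot_in[OF x]] pass.prems(4) 1] by simp
    with x pass.hyps(2) pass.prems(5) show ?thesis by (simp add: isreal_rot_rot)
  next
    case (2 z)
    have "x = z" using strand_step_eqD[OF x reach_in[OF 2(1) pass.prems(4)] 2(3)] .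
    with 2(1) pass.IH pass.prems(1,2,4,5) show ?thesis by blast
  qed
qed

text \<open>The k-th dart met by the strand leaving d; this describes the strand only
  up to its first real dart.\<close>

definition strand_dart :: "'d \<Rightarrow> nat \<Rightarrow> 'd" where
  "strand_dart d k = ((\<lambda>x. arc (rot (rot x))) ^^ k) (arc d)"

lemma strand_dart_0 [simp]: "strand_dart d 0 = arc d"
  and strand_dart_Suc [simp]: "strand_dart d (Suc k) = arc (rot (rot (strand_dart d k)))"
  by (simp_all add: strand_dart_def)

lemma strand_dart_in: "d \<in> VD \<Longrightarrow> strand_dart d k \<in> VD"
  by (induction k) (auto simp: arc_in rot_in)

lemma reach_iff_strand_dart:
  "reach d x \<longleftrightarrow> (\<exists>k. x = strand_dart d k \<and> (\<forall>j<k. \<not> isreal (strand_dart d j)))"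
proof
  show "reach d x \<Longrightarrow> \<exists>k. x = strand_dart d k \<and> (\<forall>j<k. \<not> isreal (strand_dart d j))"
  proof (induction rule: strand_reach.induct)
    case (start d)
    show ?case by (rule exI[of _ 0]) simp
  next
    case (pass d x)
    then obtain k where "x = strand_dart d k" "\<forall>j<k. \<not> isreal (strand_dart d j)" by blast
    with pass.hyps(2) show ?case by (intro exI[of _ "Suc k"]) (auto simp: less_Suc_eq)
  qed
next
  assume "\<exists>k. x = strand_dart d k \<and> (\<forall>j<k. \<not> isreal (strand_dart d j))"
  then obtain k where "x = strand_dart d k" "\<forall>j<k. \<not> isreal (strand_dart d j)" by blast
  then show "reach d x"
  proof (induction k arbitrary: x)
    case 0
    then show ?case by (simp add: strand_reach.start)
  next
    case (Suc k)
    then have "reach d (strand_dart d k)" "\<not> isreal (strand_dart d k)" by auto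
    then show ?case using Suc.prems(1) by (simp add: strand_reach.pass)
  qed
qed

lemma reach_backwards_strand_dart:
  assumes d: "d \<in> VD" and virtual: "\<forall>j\<le>m. \<not> isreal (strand_dart d j)" and "n \<le> m"
  shows "reach (strand_dart d (Suc m)) (rot (rot (strand_dart d n)))"
  using \<open>n \<le> m\<close>
proof (induction n rule: inc_induct)
  case base
  show ?case
    using strand_reach.start[of rot arc isreal "strand_dart d (Suc m)"]
    by (simp add: arc_arc rot_in strand_dart_in d)
next
  case (step n)
  let ?z = "rot (rot (strand_dart d (Suc n)))"
  have "\<not> isreal (strand_dart d (Suc n))"
    using virtual step.hyps(2) by (simp del: strand_dart_Suc)
  then have "\<not> isreal ?z"
    by (simp add: isreal_rot_rot strand_dart_in d del: strand_dart_Suc)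
  with step.IH have "reach (strand_dart d (Suc m)) (arc (rot (rot ?z)))"
    by (rule strand_reach.pass)
  then show ?case
    by (simp add: rot_rot_rot_rot arc_arc arc_in rot_in strand_dart_in d)
qed

lemma reach_reverse:
  assumes "d \<in> VD" "reach d e" "isreal e" "reach d x" "\<not> isreal x"
  shows "reach e (rot (rot x))"
proof -
  obtain m where e: "e = strand_dart d m" and before_e: "\<forall>j<m. \<not> isreal (strand_dart d j)"
    using assms(2) reach_iff_strand_dart by blast
  obtain k where x: "x = strand_dart d k" and "\<forall>j<k. \<not> isreal (strand_dart d j)"
    using assms(4) reach_iff_strand_dart by blast
  with assms(3,5) e have "k < m"
    by (metis linorder_neqE_nat)
  then obtain m' where "m = Suc m'" "k \<le> m'"
    by (cases m) auto
  with assms(1) before_e e x show ?thesis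
    using reach_backwards_strand_dart by auto
qed

end

locale real_dart_colouring = four_valent_map VD rot arc isreal
  for VD :: "'d set" and rot arc :: "'d \<Rightarrow> 'd" and isreal :: "'d \<Rightarrow> bool" +
  fixes colr :: "'d \<Rightarrow> bool"
  assumes reached: "x \<in> VD \<Longrightarrow> \<not> isreal x \<Longrightarrow> \<exists>d\<in>VD. isreal d \<and> reach d x"
    and colr_rot: "d \<in> VD \<Longrightarrow> isreal d \<Longrightarrow> colr (rot d) \<noteq> colr d"
    and strand_end: "d \<in> VD \<Longrightarrow> isreal d \<Longrightarrow> \<exists>e. isreal e \<and> reach d e \<and> colr e \<noteq> colr d"
begin

definition col :: "'d \<Rightarrow> bool" where
  "col x = (if isreal x then colr x else (\<exists>d\<in>VD. isreal d \<and> reach d x \<and> \<not> colr d))"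

lemma col_real: "isreal x \<Longrightarrow> col x = colr x"
  by (simp add: col_def)

lemma col_virtual:
  "x \<in> VD \<Longrightarrow> \<not> isreal x \<Longrightarrow> d \<in> VD \<Longrightarrow> isreal d \<Longrightarrow> reach d x \<Longrightarrow> col x = (\<not> colr d)"
  unfolding col_def by (metis reach_source_unique)

lemma col_rot: "x \<in> VD \<Longrightarrow> isreal x \<Longrightarrow> col (rot x) \<noteq> col x"
  by (simp add: col_real colr_rot isreal_rot)

lemma col_rot_rot:
  assumes x: "x \<in> VD" "\<not> isreal x"
  shows "col (rot (rot x)) \<noteq> col x"
proof -
  obtain d where d: "d \<in> VD" "isreal d" "reach d x" using reached x by blast
  then obtain e where e: "isreal e" "reach d e" "colr e \<noteq> colr d" using strand_end by blast
  have "e \<in> VD" using d e reach_in by blast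
  moreover have "reach e (rot (rot x))" using reach_reverse d e x by blast
  ultimately have "col (rot (rot x)) = (\<not> colr e)"
    using col_virtual x e by (simp add: isreal_rot_rot rot_in)
  with col_virtual[OF x d] e show ?thesis by auto
qed

lemma col_arc:
  assumes x: "x \<in> VD"
  shows "col (arc x) \<noteq> col x"
proof (cases "isreal x")
  case real_x: True
  show ?thesis
  proof (cases "isreal (arc x)")
    case True
    obtain e where "isreal e" "reach x e" "colr e \<noteq> colr x" using strand_end x real_x by blast
    with True real_x show ?thesis using reach_arc_real by (auto simp: col_real)
  next
    case False
    with real_x x show ?thesis
      using col_virtual[OF arc_in[OF x] False x real_x strand_reach.start] by (simp add: col_real)
  qed
next
  case False
  obtain d where d: "d \<in> VD" "isreal d" "reach d x" using reached x False by blast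
  from d(3) show ?thesis
  proof (cases rule: reach_cases_last_step)
    case 1
    with d x False show ?thesis using col_virtual by (simp add: arc_arc col_real)
  next
    case (2 a)
    have a: "a \<in> VD" using 2 d reach_in by blast
    have "arc x = rot (rot a)" using 2 a by (simp add: arc_arc rot_in)
    with col_rot_rot[OF a 2(2)] col_virtual[OF a 2(2) d(1,2) 2(1)]
      col_virtual[OF x False d] show ?thesis by auto
  qed
qed

lemma checkerboard_colorable: "checkerboard_colorable VD rot arc isreal"
  unfolding checkerboard_colorable_def
  by (intro exI[of _ col] ballI conjI impI) (simp_all add: col_arc col_rot col_rot_rot)

end

lemma four_valent_map_if_virtual_link_diagram:
  assumes "virtual_link_diagram VD rot arc isreal over"
  shows "four_valent_map VD rot arc isreal"
proof
  have rot: "bij_betw rot VD VD" and rot4: "\<And>d. d \<in> VD \<Longrightarrow> (rot ^^ 4) d = d"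
    using assms unfolding virtual_link_diagram_def by auto
  show "\<And>d. d \<in> VD \<Longrightarrow> rot d \<in> VD" using rot bij_betwE by blast
  show "inj_on rot VD" using rot bij_betw_imp_inj_on by blast
  show "\<And>d. d \<in> VD \<Longrightarrow> rot (rot (rot (rot d))) = d" using rot4 by (simp add: numeral_eq_Suc)
qed (use assms in \<open>auto simp: virtual_link_diagram_def\<close>)

lemma med_rot_in:
  "cyclic_graph H \<sigma> \<alpha> \<Longrightarrow> x \<in> H \<times> UNIV \<Longrightarrow> med_rot \<alpha> x \<in> H \<times> UNIV"
  by (auto simp: cyclic_graph_def med_rot_def)

lemma med_arc_in:
  assumes "cyclic_graph H \<sigma> \<alpha>" "x \<in> H \<times> UNIV"
  shows "med_arc H \<sigma> x \<in> H \<times> UNIV"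
proof -
  have "bij_betw \<sigma> H H" using assms(1) by (simp add: cyclic_graph_def)
  then have "\<sigma> h \<in> H" "the_inv_into H \<sigma> h \<in> H" if "h \<in> H" for h
    using that bij_betwE by (auto simp: bij_betw_def intro: the_inv_into_into)
  with assms(2) show ?thesis by (auto simp: med_arc_def)
qed

lemma snd_med_rot [simp]: "snd (med_rot \<alpha> x) = (\<not> snd x)"
  by (simp add: med_rot_def)

lemma snd_med_arc [simp]: "snd (med_arc H \<sigma> x) = (\<not> snd x)"
  by (simp add: med_arc_def)

theorem lemma3p1:
  fixes H :: "'h set" and \<sigma> \<alpha> :: "'h \<Rightarrow> 'h" and sg :: "'h \<Rightarrow> bool"
    and VD :: "'d set" and rot arc :: "'d \<Rightarrow> 'd" and isreal over :: "'d \<Rightarrow> bool"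
  assumes "cyclic_graph H \<sigma> \<alpha>"
    and "edge_signing H \<alpha> sg"
    and "virtual_link_diagram VD rot arc isreal over"
    and "associated_with H \<sigma> \<alpha> sg VD rot arc isreal over"
  shows "checkerboard_colorable VD rot arc isreal"
proof -
  interpret four_valent_map VD rot arc isreal
    using assms(3) by (rule four_valent_map_if_virtual_link_diagram)
  obtain f where f: "bij_betw f (H \<times> UNIV) {d\<in>VD. isreal d}"
    and f_rot: "\<And>x. x \<in> H \<times> UNIV \<Longrightarrow> f (med_rot \<alpha> x) = rot (f x)"
    and f_arc: "\<And>x. x \<in> H \<times> UNIV \<Longrightarrow> reach (f x) (f (med_arc H \<sigma> x))"
    and reached: "\<And>x. x \<in> VD \<Longrightarrow> \<not> isreal x \<Longrightarrow> \<exists>d\<in>VD. isreal d \<and> reach d x"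
    using assms(4) unfolding associated_with_def by blast
  define colr where "colr d = snd (inv_into (H \<times> UNIV) f d)" for d
  have f_real: "f y \<in> VD" "isreal (f y)" "colr (f y) = snd y" if "y \<in> H \<times> UNIV" for y
    using that f unfolding colr_def bij_betw_def by auto
  have real_f: "\<exists>y\<in>H \<times> UNIV. d = f y" if "d \<in> VD" "isreal d" for d
    using that f unfolding bij_betw_def by blast
  interpret real_dart_colouring VD rot arc isreal colr
  proof
    fix d assume "d \<in> VD" "isreal d"
    then obtain y where y: "y \<in> H \<times> UNIV" "d = f y" using real_f by blast
    show "colr (rot d) \<noteq> colr d"
      using y f_rot f_real med_rot_in[OF assms(1)] by (metis snd_med_rot)
    show "\<exists>e. isreal e \<and> reach d e \<and> colr e \<noteq> colr d"
      using y f_arc f_real med_arc_in[OF assms(1)] by (metis snd_med_arc)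
  qed (use reached in blast)
  show ?thesis by (rule checkerboard_colorable)
qed

end
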